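(* Let $\sigma>0$, $\eta>0$, $\hat\alpha>0$, $h>0$, $r\ge0$, $a\in\mathbb{R}$, and for $\beta\ge0$ let $v_\beta$ denote the unique $C^1[0,\infty)$ solution of $\frac{\sigma^2}2v'(y)=\beta+\frac{\hat\alpha}4v(y)^2+\eta y(v(y)-\frac h\eta)-av(y)$, $y\ge0$, $v(0)=-r$. Let $\underline\beta_2=-ar-\frac{\hat\alpha r^2}4$. If either $a>-\frac{\hat\alpha}4r$ and $\beta\in\mathcal D_1$, or $a\le-\frac{\hat\alpha}4r$ and $\beta\in\mathcal D_2$, then $\lim_{x\to\infty}v_\beta(x)=-\infty$.
   Context: $\mathcal D_1=\{\beta\ge0:\exists x_\beta\ge0$ such that $v_\beta$ is nondecreasing on $(0,x_\beta)$ and decreasing on $(x_\beta,\infty)\}$ and $\mathcal D_2=\{\beta>\underline\beta_2:\exists x_\beta\ge0$ such that $v_\beta$ is nondecreasing on $(0,x_\beta)$ and decreasing on $(x_\beta,\infty)\}$. *)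

theory Defs
  imports "HOL-Analysis.Analysis"
begin

text \<open>v is a C^1 solution on [0,oo) of
  (sigma^2/2) v'(y) = beta + (alpha/4) v(y)^2 + eta y (v(y) - h/eta) - a v(y),  v(0) = -r.
  (Differentiability within [0,oo) with derivative given by the right-hand side; continuity
  of the derivative then follows from the equation.)\<close>
definition is_v_sol :: "real \<Rightarrow> real \<Rightarrow> real \<Rightarrow> real \<Rightarrow> real \<Rightarrow> real \<Rightarrow> real \<Rightarrow> (real \<Rightarrow> real) \<Rightarrow> bool" where
  "is_v_sol \<sigma> \<eta> \<alpha> h r a \<beta> v \<longleftrightarrow>
     v 0 = - r \<and>
     (\<forall>y\<ge>0. (v has_real_derivative
        (2 / \<sigma>\<^sup>2) * (\<beta> + \<alpha> / 4 * (v y)\<^sup>2 + \<eta> * y * (v y - h / \<eta>) - a * v y))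
        (at y within {0..}))"

definition unimodal_shape :: "(real \<Rightarrow> real) \<Rightarrow> bool" where
  "unimodal_shape v \<longleftrightarrow> (\<exists>x\<ge>0. mono_on {0<..<x} v \<and>
      (\<forall>s t. x < s \<longrightarrow> s < t \<longrightarrow> v t < v s))"

end

(* Write L = h/\<eta>. Since v is strictly decreasing on some (x0,\<infinity>), either v \<rightarrow> -\<infinity> or v is bounded
   below there. In the bounded case, v cannot fall below L: it would then stay below L - \<epsilon>, the
   term \<eta> y (v - L) would push v' below a negative constant, and v would be unbounded after all.
   So v > L on (x0,\<infinity>). Now v' = (2/\<sigma>^2) (c + (v - L)(\<alpha>/4 (v + L) - a + \<eta> y)) with
   c = \<beta> + \<alpha> L^2/4 - a L. If c \<ge> 0 this is positive for large y, contradicting monotonicity;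
   if c < 0 then v' < 0 whenever v = L, so v, which starts at -r < L, can never reach L. *)

theory Submission
  imports Defs
begin

lemma deriv_nonpos_if_right_le:
  fixes f :: "real \<Rightarrow> real"
  assumes "(f has_real_derivative D) (at x)" and "\<And>t. x < t \<Longrightarrow> f t \<le> f x"
  shows "D \<le> 0"
proof (rule ccontr)
  assume "\<not> D \<le> 0"
  then obtain d where "d > 0" "\<And>h. 0 < h \<Longrightarrow> h < d \<Longrightarrow> f x < f (x + h)"
    using DERIV_pos_inc_right[OF assms(1)] by auto
  then have "f x < f (x + d / 2)" by simp
  with assms(2)[of "x + d / 2"] \<open>d > 0\<close> show False by simp
qed

lemma antitone_filterlim_at_bot_or_bdd_below:
  fixes f :: "real \<Rightarrow> real"
  assumes "\<And>s t. x0 < s \<Longrightarrow> s \<le> t \<Longrightarrow> f t \<le> f s"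
  shows "filterlim f at_bot at_top \<or> (\<exists>M. \<forall>z>x0. M \<le> f z)"
proof (rule disjCI)
  assume unbdd: "\<not> (\<exists>M. \<forall>z>x0. M \<le> f z)"
  show "filterlim f at_bot at_top"
    unfolding filterlim_at_bot eventually_at_top_linorder
  proof
    fix Z
    obtain z where "z > x0" "f z < Z" using unbdd by (meson not_le)
    then show "\<exists>z. \<forall>t\<ge>z. f t \<le> Z" using assms by (meson less_imp_le order.trans)
  qed
qed

lemma filterlim_at_bot_if_deriv_le_neg:
  fixes f f' :: "real \<Rightarrow> real"
  assumes "c > 0"
    and deriv: "\<And>z. Y \<le> z \<Longrightarrow> (f has_real_derivative f' z) (at z)"
    and neg: "\<And>z. Y \<le> z \<Longrightarrow> f' z \<le> - c"
  shows "filterlim f at_bot at_top"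
proof -
  have linear_bound: "f z \<le> f Y - c * (z - Y)" if "Y \<le> z" for z
  proof -
    have "(\<lambda>t. f t + c * t) z \<le> (\<lambda>t. f t + c * t) Y"
    proof (rule DERIV_nonpos_imp_nonincreasing[OF that])
      fix t assume "Y \<le> t"
      then show "\<exists>y. ((\<lambda>t. f t + c * t) has_real_derivative y) (at t) \<and> y \<le> 0"
        using deriv[of t] neg[of t] by (auto intro!: derivative_eq_intros)
    qed
    then show ?thesis by (simp add: algebra_simps)
  qed
  show ?thesis
    unfolding filterlim_at_bot eventually_at_top_linorder
  proof
    fix Z
    have "f z \<le> Z" if "Y + (f Y - Z) / c \<le> z" "Y \<le> z" for z
    proof -
      have "f Y - Z \<le> c * (z - Y)" using that \<open>c > 0\<close> by (simp add: field_simps)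
      then show ?thesis using linear_bound[OF \<open>Y \<le> z\<close>] by linarith
    qed
    then show "\<exists>z0. \<forall>z\<ge>z0. f z \<le> Z" by (meson max.boundedE order.refl)
  qed
qed

lemma below_level_if_deriv_neg_at_level:
  fixes f f' :: "real \<Rightarrow> real"
  assumes deriv: "\<And>t. a \<le> t \<Longrightarrow> (f has_real_derivative f' t) (at t within {a..})"
    and start: "f a < c"
    and crossing: "\<And>t. a \<le> t \<Longrightarrow> f t = c \<Longrightarrow> f' t < 0"
    and "a \<le> b"
  shows "f b < c"
proof (rule ccontr)
  assume "\<not> f b < c"
  define S where "S = {a..b} \<inter> f -` {c..}"
  define s where "s = Inf S"
  have cont: "continuous_on {a..b} f"
    using DERIV_continuous_on[of "{a..}" f f'] deriv by (auto intro: continuous_on_subset)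
  have bdd: "bdd_below S" by (auto simp: S_def intro: bdd_belowI[of _ a])
  have "s \<in> S"
    unfolding s_def
  proof (rule closed_contains_Inf[OF _ bdd])
    show "S \<noteq> {}" using \<open>\<not> f b < c\<close> \<open>a \<le> b\<close> by (auto simp: S_def)
    show "closed S" unfolding S_def by (rule continuous_closed_preimage[OF cont]) auto
  qed
  then have "a < s" "s \<le> b" "c \<le> f s" using start by (auto simp: S_def less_le)
  obtain t where "a \<le> t" "t \<le> s" "f t = c"
    using IVT'[of f a c s] start \<open>c \<le> f s\<close> \<open>a < s\<close> \<open>s \<le> b\<close>
      continuous_on_subset[OF cont, of "{a..s}"] by auto
  with \<open>s \<le> b\<close> have "t \<in> S" by (simp add: S_def)
  with \<open>t \<le> s\<close> have "t = s" using cInf_lower[OF _ bdd] by (fastforce simp: s_def)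
  with \<open>f t = c\<close> have "f s = c" by simp
  have "(f has_real_derivative f' s) (at s)"
    using deriv[of s] \<open>a < s\<close> at_within_interior[of s "{a..}"] by simp
  moreover have "f' s < 0" using crossing \<open>a < s\<close> \<open>f s = c\<close> by simp
  ultimately obtain d where "d > 0" and left: "\<And>h. 0 < h \<Longrightarrow> h < d \<Longrightarrow> f s < f (s - h)"
    using DERIV_neg_dec_left by blast
  define u where "u = s - min (d / 2) (s - a)"
  have "a \<le> u" "u < s" using \<open>d > 0\<close> \<open>a < s\<close> by (auto simp: u_def)
  moreover have "f s < f u"
    using left[of "min (d / 2) (s - a)"] \<open>d > 0\<close> \<open>a < s\<close> by (simp add: u_def)
  ultimately have "u \<in> S" using \<open>s \<le> b\<close> \<open>f s = c\<close> by (simp add: S_def)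
  then have "s \<le> u" using cInf_lower[OF _ bdd] by (simp add: s_def)
  with \<open>u < s\<close> show False by simp
qed

locale riccati_solution =
  fixes \<sigma> \<eta> \<alpha> h r a \<beta> :: real and v :: "real \<Rightarrow> real"
  assumes \<sigma>_pos: "\<sigma> > 0" and \<eta>_pos: "\<eta> > 0" and \<alpha>_pos: "\<alpha> > 0" and h_pos: "h > 0"
    and r_nonneg: "r \<ge> 0" and sol: "is_v_sol \<sigma> \<eta> \<alpha> h r a \<beta> v"
begin

definition L :: real where "L = h / \<eta>"

definition c :: real where "c = \<beta> + \<alpha> / 4 * L\<^sup>2 - a * L"

definition v' :: "real \<Rightarrow> real" where
  "v' y = 2 / \<sigma>\<^sup>2 * (\<beta> + \<alpha> / 4 * (v y)\<^sup>2 + \<eta> * y * (v y - L) - a * v y)"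

lemma L_pos: "L > 0"
  using h_pos \<eta>_pos by (simp add: L_def)

lemma v_at_0: "v 0 = - r"
  using sol by (simp add: is_v_sol_def)

lemma v_has_deriv_within: "y \<ge> 0 \<Longrightarrow> (v has_real_derivative v' y) (at y within {0..})"
  using sol by (simp add: is_v_sol_def v'_def L_def)

lemma v_has_deriv_at: "y > 0 \<Longrightarrow> (v has_real_derivative v' y) (at y)"
  using v_has_deriv_within[of y] at_within_interior[of y "{0..}"] by simp

lemma v'_factored: "v' y = 2 / \<sigma>\<^sup>2 * (c + (v y - L) * (\<alpha> / 4 * (v y + L) - a + \<eta> * y))"
  unfolding v'_def c_def
  by (rule arg_cong[where f = "(*) (2 / \<sigma>\<^sup>2)"]) (simp add: field_simps power2_eq_square)

lemma v'_pos_above_L: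
  assumes "c \<ge> 0" "v y > L" "\<eta> * y > a"
  shows "v' y > 0"
proof -
  have "\<alpha> / 4 * (v y + L) > 0" using assms(2) L_pos \<alpha>_pos by simp
  then have "(v y - L) * (\<alpha> / 4 * (v y + L) - a + \<eta> * y) > 0" using assms(2,3) by simp
  then show ?thesis using assms(1) \<sigma>_pos v'_factored[of y] by simp
qed

lemma below_L_if_c_neg:
  assumes "c < 0" "y \<ge> 0"
  shows "v y < L"
proof (rule below_level_if_deriv_neg_at_level[OF v_has_deriv_within _ _ \<open>y \<ge> 0\<close>])
  show "v 0 < L" using v_at_0 r_nonneg L_pos by simp
  show "v' t < 0" if "v t = L" for t
    using v'_factored[of t] that \<open>c < 0\<close> \<sigma>_pos by (simp add: divide_neg_pos)
qed

lemma filterlim_at_bot_if_below_L: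
  assumes dec: "\<And>s t. y0 \<le> s \<Longrightarrow> s < t \<Longrightarrow> v t < v s" and "y0 > 0" and "v y0 \<le> L"
  shows "filterlim v at_bot at_top"
proof -
  have "filterlim v at_bot at_top \<or> (\<exists>M. \<forall>z>y0. M \<le> v z)"
    by (rule antitone_filterlim_at_bot_or_bdd_below) (use dec in \<open>fastforce simp: le_less\<close>)
  moreover have "filterlim v at_bot at_top" if M: "\<forall>z>y0. M \<le> v z" for M
  proof -
    define y1 where "y1 = y0 + 1"
    define \<epsilon> where "\<epsilon> = L - v y1"
    define R where "R = \<bar>M\<bar> + L"
    define B where "B = \<beta> + \<alpha> / 4 * R\<^sup>2 + \<bar>a\<bar> * R"
    have "\<epsilon> > 0" using dec[of y0 y1] \<open>v y0 \<le> L\<close> by (simp add: \<epsilon>_def y1_def)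
    have bracket_bound: "\<beta> + \<alpha> / 4 * (v z)\<^sup>2 + \<eta> * z * (v z - L) - a * v z \<le> B - \<eta> * \<epsilon> * z"
      if "y1 \<le> z" for z
    proof -
      have "M \<le> v z" using M that by (simp add: y1_def)
      have "v z \<le> L - \<epsilon>"
        using dec[of y1 z] that by (cases "z = y1") (auto simp: y1_def \<epsilon>_def)
      with \<open>M \<le> v z\<close> have "\<bar>v z\<bar> \<le> R" using \<open>\<epsilon> > 0\<close> L_pos by (simp add: R_def)
      then have "\<alpha> / 4 * (v z)\<^sup>2 \<le> \<alpha> / 4 * R\<^sup>2"
        using \<alpha>_pos by (simp add: power2_le_iff_abs_le)
      moreover have "- a * v z \<le> \<bar>a\<bar> * R"
      proof -
        have "- a * v z \<le> \<bar>a\<bar> * \<bar>v z\<bar>" by (simp add: abs_mult[symmetric])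
        also have "\<dots> \<le> \<bar>a\<bar> * R" using \<open>\<bar>v z\<bar> \<le> R\<close> by (simp add: mult_left_mono)
        finally show ?thesis .
      qed
      moreover have "\<eta> * z * (v z - L) \<le> \<eta> * z * (- \<epsilon>)"
        using \<open>v z \<le> L - \<epsilon>\<close> that \<open>y0 > 0\<close> \<eta>_pos by (intro mult_left_mono) (auto simp: y1_def)
      ultimately show ?thesis by (simp add: B_def algebra_simps)
    qed
    define Y where "Y = max y1 ((B + 1) / (\<eta> * \<epsilon>))"
    show ?thesis
    proof (rule filterlim_at_bot_if_deriv_le_neg[of "2 / \<sigma>\<^sup>2" Y v v'])
      show "2 / \<sigma>\<^sup>2 > 0" using \<sigma>_pos by simp
      show "(v has_real_derivative v' z) (at z)" if "Y \<le> z" for z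
        using v_has_deriv_at that \<open>y0 > 0\<close> by (simp add: Y_def y1_def)
      show "v' z \<le> - (2 / \<sigma>\<^sup>2)" if "Y \<le> z" for z
      proof -
        have "B + 1 \<le> \<eta> * \<epsilon> * z"
          using that \<eta>_pos \<open>\<epsilon> > 0\<close> by (simp add: Y_def pos_divide_le_eq mult.commute)
        then have "\<beta> + \<alpha> / 4 * (v z)\<^sup>2 + \<eta> * z * (v z - L) - a * v z \<le> -1"
          using bracket_bound[of z] that by (simp add: Y_def)
        then have "v' z \<le> 2 / \<sigma>\<^sup>2 * (-1)"
          unfolding v'_def by (rule mult_left_mono) simp
        then show ?thesis by simp
      qed
    qed
  qed
  ultimately show ?thesis by blast
qed

lemma filterlim_at_bot_if_eventually_decreasing:
  assumes "x0 \<ge> 0" and dec: "\<And>s t. x0 < s \<Longrightarrow> s < t \<Longrightarrow> v t < v s"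
  shows "filterlim v at_bot at_top"
proof (cases "\<exists>y0>x0. v y0 \<le> L")
  case True
  then obtain y0 where "y0 > x0" "v y0 \<le> L" by blast
  then show ?thesis
    using filterlim_at_bot_if_below_L[of y0] dec \<open>x0 \<ge> 0\<close> by simp
next
  case False
  then have above: "L < v y" if "y > x0" for y using that by auto
  show ?thesis
  proof (cases "c \<ge> 0")
    case True
    define y where "y = max x0 (a / \<eta>) + 1"
    have "y > x0" by (simp add: y_def)
    have "a / \<eta> < y" by (simp add: y_def)
    then have "\<eta> * y > a" using \<eta>_pos by (simp add: pos_divide_less_eq mult.commute)
    then have "v' y > 0" using v'_pos_above_L[OF True above[OF \<open>y > x0\<close>]] by simp
    moreover have "v' y \<le> 0"
      using deriv_nonpos_if_right_le[OF v_has_deriv_at] dec \<open>y > x0\<close> \<open>x0 \<ge> 0\<close>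
      by (simp add: less_imp_le)
    ultimately show ?thesis by simp
  next
    case False
    then have "v (x0 + 1) < L" using below_L_if_c_neg \<open>x0 \<ge> 0\<close> by simp
    with above[of "x0 + 1"] show ?thesis by simp
  qed
qed

end

theorem lemma13:
  fixes \<sigma> \<eta> \<alpha> h r a \<beta> :: real and v :: "real \<Rightarrow> real"
  assumes "\<sigma> > 0" "\<eta> > 0" "\<alpha> > 0" "h > 0" "r \<ge> 0"
    and "\<beta> \<ge> 0"
    and sol: "is_v_sol \<sigma> \<eta> \<alpha> h r a \<beta> v"
    and cases: "(a > - (\<alpha> / 4) * r \<and> unimodal_shape v) \<or>
                (a \<le> - (\<alpha> / 4) * r \<and> \<beta> > - a * r - \<alpha> * r\<^sup>2 / 4 \<and> unimodal_shape v)"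
  shows "filterlim v at_bot at_top"
proof -
  interpret riccati_solution \<sigma> \<eta> \<alpha> h r a \<beta> v
    using assms by unfold_locales
  obtain x0 where "x0 \<ge> 0" "\<And>s t. x0 < s \<Longrightarrow> s < t \<Longrightarrow> v t < v s"
    using cases unfolding unimodal_shape_def by blast
  then show ?thesis by (rule filterlim_at_bot_if_eventually_decreasing)
qed

end
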